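(* Let $X$ be a finite simple connected graph and $u,v \in V(X)$. If $u$ and $v$ are antipodal vertices, then $u$ and $v$ are spectrally extremal vertices and they are strongly cospectral. Conversely, if $u$ is spectrally extremal, $u$ and $v$ are strongly cospectral, and $d(u,v) = \varepsilon_u$, then $u$ and $v$ are antipodal vertices.
   Context: $A$ is the adjacency matrix of $X$ with spectral decomposition $A = \sum_r \theta_r E_r$ ($\theta_r$ distinct eigenvalues, $E_r$ orthogonal projections onto eigenspaces); $e_w$ is the standard basis vector of $w$. Eigenvalue support: $\Phi_u = \{\theta_r : E_r e_u \ne 0\}$; dual degree $d^*(u) = |\Phi_u|-1$; eccentricity $\varepsilon_u = \max_w d(u,w)$; $u$ is spectrally extremal if $\varepsilon_u = d^*(u)$ (in general $\varepsilon_u \le d^*(u)$). Vertices $u,v$ are cospectral if $X\setminus u$ and $X\setminus v$ have the same adjacency spectrum (equivalently $(E_r)_{u,u}=(E_r)_{v,v}$ for all $r$), and strongly cospectral if $E_r e_u = \pm E_r e_v$ for all $r$. Let $\varphi$ be the positive eigenvector of $A$ for its largest eigenvalue and $D = \mathrm{diag}(\varphi)$. A partition of $V(X)$ is pseudo equitable if for each class $C$ and each vertex $x$, the sum $\sum_{y \in C} (D^{-1}AD)_{x,y}$ depends only on the class containing $x$. The distance partition of $u$ is the partition of $V(X)$ into the sets $\{w : d(u,w) = i\}$. Vertices $u$ and $v$ are antipodal if: there is a pseudo equitable partition that is simultaneously the distance partition of $u$ and the distance partition of $v$; $\{u\}$ and $\{v\}$ are singleton classes of this partition at maximum distance from each other;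 and $u$ and $v$ are cospectral. *)

theory Defs
  imports "HOL-Analysis.Analysis"
begin

definition simple_graph :: "('n::finite \<Rightarrow> 'n \<Rightarrow> bool) \<Rightarrow> bool" where
  "simple_graph adj \<longleftrightarrow> (\<forall>x y. adj x y \<longrightarrow> adj y x) \<and> (\<forall>x. \<not> adj x x)"

definition connected_graph :: "('n::finite \<Rightarrow> 'n \<Rightarrow> bool) \<Rightarrow> bool" where
  "connected_graph adj \<longleftrightarrow> (\<forall>u w. \<exists>n. (adj ^^ n) u w)"

definition gdist :: "('n::finite \<Rightarrow> 'n \<Rightarrow> bool) \<Rightarrow> 'n \<Rightarrow> 'n \<Rightarrow> nat" where
  "gdist adj u w = (LEAST n. (adj ^^ n) u w)"

definition ecc :: "('n::finite \<Rightarrow> 'n \<Rightarrow> bool) \<Rightarrow> 'n \<Rightarrow> nat" where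
  "ecc adj u = Max (range (gdist adj u))"

definition adj_matrix :: "('n::finite \<Rightarrow> 'n \<Rightarrow> bool) \<Rightarrow> real^'n^'n" where
  "adj_matrix adj = (\<chi> i j. if adj i j then 1 else 0)"

definition eigenvalue :: "('n::finite \<Rightarrow> 'n \<Rightarrow> bool) \<Rightarrow> real \<Rightarrow> bool" where
  "eigenvalue adj \<theta> \<longleftrightarrow> (\<exists>x. x \<noteq> 0 \<and> adj_matrix adj *v x = \<theta> *\<^sub>R x)"

definition eigenspace :: "('n::finite \<Rightarrow> 'n \<Rightarrow> bool) \<Rightarrow> real \<Rightarrow> (real^'n) set" where
  "eigenspace adj \<theta> = {x. adj_matrix adj *v x = \<theta> *\<^sub>R x}"

definition eproj :: "('n::finite \<Rightarrow> 'n \<Rightarrow> bool) \<Rightarrow> real \<Rightarrow> real^'n^'n" where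
  "eproj adj \<theta> = (THE P. P ** P = P \<and> transpose P = P \<and>
                        range (\<lambda>x. P *v x) = eigenspace adj \<theta>)"

definition evec :: "'n::finite \<Rightarrow> real^'n" where
  "evec w = axis w 1"

definition eig_support :: "('n::finite \<Rightarrow> 'n \<Rightarrow> bool) \<Rightarrow> 'n \<Rightarrow> real set" where
  "eig_support adj u = {\<theta>. eigenvalue adj \<theta> \<and> eproj adj \<theta> *v evec u \<noteq> 0}"

definition dual_degree :: "('n::finite \<Rightarrow> 'n \<Rightarrow> bool) \<Rightarrow> 'n \<Rightarrow> nat" where
  "dual_degree adj u = card (eig_support adj u) - 1"

definition spectrally_extremal :: "('n::finite \<Rightarrow> 'n \<Rightarrow> bool) \<Rightarrow> 'n \<Rightarrow> bool" where
  "spectrally_extremal adj u \<longleftrightarrow> ecc adj u = dual_degree adj u"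

definition cospectral :: "('n::finite \<Rightarrow> 'n \<Rightarrow> bool) \<Rightarrow> 'n \<Rightarrow> 'n \<Rightarrow> bool" where
  "cospectral adj u v \<longleftrightarrow>
     (\<forall>\<theta>. eigenvalue adj \<theta> \<longrightarrow> eproj adj \<theta> $ u $ u = eproj adj \<theta> $ v $ v)"

definition strongly_cospectral :: "('n::finite \<Rightarrow> 'n \<Rightarrow> bool) \<Rightarrow> 'n \<Rightarrow> 'n \<Rightarrow> bool" where
  "strongly_cospectral adj u v \<longleftrightarrow>
     (\<forall>\<theta>. eigenvalue adj \<theta> \<longrightarrow>
        eproj adj \<theta> *v evec u = eproj adj \<theta> *v evec v \<or>
        eproj adj \<theta> *v evec u = - (eproj adj \<theta> *v evec v))"

definition perron_vec :: "('n::finite \<Rightarrow> 'n \<Rightarrow> bool) \<Rightarrow> real^'n" where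
  "perron_vec adj = (SOME \<phi>. (\<forall>i. \<phi> $ i > 0) \<and>
      adj_matrix adj *v \<phi> = Max {\<theta>. eigenvalue adj \<theta>} *\<^sub>R \<phi>)"

text \<open>Entries of D^-1 A D with D = diag(\<phi>).\<close>
definition scaled_adj :: "('n::finite \<Rightarrow> 'n \<Rightarrow> bool) \<Rightarrow> 'n \<Rightarrow> 'n \<Rightarrow> real" where
  "scaled_adj adj x y = adj_matrix adj $ x $ y * perron_vec adj $ y / perron_vec adj $ x"

definition is_partition :: "'n set set \<Rightarrow> bool" where
  "is_partition P \<longleftrightarrow> \<Union>P = UNIV \<and> {} \<notin> P \<and>
     (\<forall>C\<in>P. \<forall>C'\<in>P. C \<noteq> C' \<longrightarrow> C \<inter> C' = {})"

definition pseudo_equitable :: "('n::finite \<Rightarrow> 'n \<Rightarrow> bool) \<Rightarrow> 'n set set \<Rightarrow> bool" where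
  "pseudo_equitable adj P \<longleftrightarrow> is_partition P \<and>
     (\<forall>C\<in>P. \<forall>C'\<in>P. \<forall>x\<in>C'. \<forall>x'\<in>C'.
        (\<Sum>y\<in>C. scaled_adj adj x y) = (\<Sum>y\<in>C. scaled_adj adj x' y))"

definition distance_partition :: "('n::finite \<Rightarrow> 'n \<Rightarrow> bool) \<Rightarrow> 'n \<Rightarrow> 'n set set" where
  "distance_partition adj u = (\<lambda>i. {w. gdist adj u w = i}) ` range (gdist adj u)"

definition antipodal :: "('n::finite \<Rightarrow> 'n \<Rightarrow> bool) \<Rightarrow> 'n \<Rightarrow> 'n \<Rightarrow> bool" where
  "antipodal adj u v \<longleftrightarrow>
     (\<exists>P. pseudo_equitable adj P \<and> P = distance_partition adj u \<and>
          P = distance_partition adj v \<and> {u} \<in> P \<and> {v} \<in> P \<and>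
          gdist adj u v = ecc adj u) \<and>
     cospectral adj u v"

end

theory Submission
  imports Defs "HOL-Computational_Algebra.Polynomial"
begin

text \<open>The vertex vector \<open>e\<^sub>u\<close> generates the \<open>A\<close>-invariant Krylov space
  \<open>K\<^sub>u = span {A\<^sup>k e\<^sub>u}\<close>. It is spanned by the pairwise orthogonal nonzero vectors \<open>E\<^sub>r e\<^sub>u\<close>,
  so \<open>dim K\<^sub>u = |\<Phi>\<^sub>u| = d*(u) + 1\<close>; and \<open>A\<^sup>i e\<^sub>u\<close> is the first of the vectors \<open>A\<^sup>k e\<^sub>u\<close> to
  reach the vertices at distance \<open>i\<close>, so \<open>dim K\<^sub>u \<ge> \<epsilon>\<^sub>u + 1\<close>. The Perron vector \<open>\<phi>\<close> restricted
  to the distance classes of \<open>u\<close> gives the layer vectors, which span a space \<open>L\<^sub>u \<ni> e\<^sub>u\<close> of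
  dimension at most \<open>\<epsilon>\<^sub>u + 1\<close>; the distance partition of \<open>u\<close> is pseudo equitable exactly when
  \<open>L\<^sub>u\<close> is \<open>A\<close>-invariant, that is, exactly when \<open>K\<^sub>u = L\<^sub>u\<close>. Then \<open>u\<close> is spectrally
  extremal, and a singleton class \<open>{v}\<close> puts \<open>e\<^sub>v\<close> into \<open>K\<^sub>u\<close>, which together with
  cospectrality is strong cospectrality.

  Conversely, let \<open>d = d(u,v) = \<epsilon>\<^sub>u = d*(u)\<close> and \<open>e\<^sub>v \<in> K\<^sub>u\<close>. For each \<open>i \<le> d\<close> the spans of
  \<open>e\<^sub>u, \<dots>, A\<^sup>i e\<^sub>u\<close> and of \<open>e\<^sub>v, \<dots>, A\<^bsup>d-i\<^esup> e\<^sub>v\<close> have dimensions summing to at least \<open>d + 2\<close>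
  inside the \<open>(d + 1)\<close>-dimensional \<open>K\<^sub>u\<close>, so they share a nonzero vector, supported on the vertices at
  distance \<open>i\<close> from \<open>u\<close> and \<open>d - i\<close> from \<open>v\<close>. These vectors form a basis of \<open>K\<^sub>u\<close>; expanding
  \<open>\<phi> \<in> K\<^sub>u\<close> in it shows that every vertex lies on a geodesic from \<open>u\<close> to \<open>v\<close> and that
  \<open>K\<^sub>u = L\<^sub>u\<close>.\<close>

section \<open>Linear algebra\<close>

lemma symmetric_matrix_inner:
  fixes M :: "real^'n^'n"
  assumes "transpose M = M"
  shows "(M *v x) \<bullet> y = x \<bullet> (M *v y)"
  by (metis assms dot_lmul_matrix transpose_matrix_vector)

lemma symmetric_matrixI:
  fixes M :: "real^'n^'n"
  assumes "\<And>x y. (M *v x) \<bullet> y = x \<bullet> (M *v y)"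
  shows "transpose M = M"
proof -
  have "transpose M *v x = M *v x" for x
    by (metis assms dot_lmul_matrix transpose_matrix_vector vector_eq_rdot)
  then show ?thesis by (simp add: matrix_eq)
qed

lemma projection_matrix_unique:
  fixes P Q :: "real^'n^'n"
  assumes P: "P ** P = P" "transpose P = P" and Q: "Q ** Q = Q" "transpose Q = Q"
    and same_range: "range (\<lambda>x. P *v x) = range (\<lambda>x. Q *v x)"
  shows "P = Q"
proof -
  have residual_orth: "x \<bullet> r = (M *v x) \<bullet> r"
    if idem: "M ** M = M" and sym: "transpose M = M" and r: "r \<in> range (\<lambda>x. M *v x)"
    for M :: "real^'n^'n" and x r
  proof -
    obtain z where z: "r = M *v z" using r by blast
    have "(M *v x) \<bullet> (M *v z) = x \<bullet> (M *v (M *v z))"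
      using symmetric_matrix_inner[OF sym] by simp
    also have "\<dots> = x \<bullet> (M *v z)" by (simp add: matrix_vector_mul_assoc idem)
    finally show ?thesis using z by simp
  qed
  have "P *v x = Q *v x" for x
  proof -
    let ?d = "P *v x - Q *v x"
    have "subspace (range (\<lambda>x. P *v x))"
      by (metis linear_subspace_image matrix_vector_mul_linear subspace_UNIV)
    then have d: "?d \<in> range (\<lambda>x. P *v x)"
      using same_range by (metis rangeI subspace_diff)
    have "?d \<bullet> ?d = 0"
      using residual_orth[OF P d, of x] residual_orth[OF Q, of ?d x] d same_range
      by (simp add: inner_diff_left)
    then show ?thesis by simp
  qed
  then show ?thesis by (simp add: matrix_eq)
qed

lemma orthonormal_expansion_inner:
  fixes B :: "'a::real_inner set"
  assumes "finite B" "pairwise orthogonal B" "\<And>x. x \<in> B \<Longrightarrow> norm x = 1" "b \<in> B"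
  shows "b \<bullet> (\<Sum>b'\<in>B. (b' \<bullet> x) *\<^sub>R b') = b \<bullet> x"
proof -
  have "b \<bullet> (\<Sum>b'\<in>B. (b' \<bullet> x) *\<^sub>R b') = (\<Sum>b'\<in>B. if b' = b then b \<bullet> x else 0)"
    unfolding inner_sum_right
    by (rule sum.cong) (use assms(2-4) in \<open>auto simp: pairwise_def orthogonal_def norm_eq_1 inner_commute\<close>)
  also have "\<dots> = b \<bullet> x" using assms(1,4) by simp
  finally show ?thesis .
qed

lemma projection_matrix_exists:
  fixes S :: "(real^'n) set"
  assumes "subspace S"
  shows "\<exists>P. P ** P = P \<and> transpose P = P \<and> range (\<lambda>x. P *v x) = S"
proof -
  obtain B where B: "B \<subseteq> S" "pairwise orthogonal B" "\<And>x. x \<in> B \<Longrightarrow> norm x = 1"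
     "independent B" "span B = S"
    using orthonormal_basis_subspace[OF assms] by metis
  have fin: "finite B" using B(4) independent_imp_finite by blast
  define f where "f x = (\<Sum>b\<in>B. (b \<bullet> x) *\<^sub>R b)" for x
  have lin: "linear f" unfolding f_def
    by (intro linearI)
      (auto simp: inner_add_right scaleR_add_left sum.distrib scaleR_sum_right inner_scaleR_right)
  define P where "P = matrix f"
  have Pf: "P *v x = f x" for x using lin by (simp add: P_def matrix_works)
  have bf: "b \<bullet> f x = b \<bullet> x" if "b \<in> B" for b x
    unfolding f_def using fin B(2,3) that by (rule orthonormal_expansion_inner)
  have fS: "f x \<in> S" for x
  proof -
    have "f x \<in> span B" unfolding f_def by (intro span_sum span_scale span_base)
    then show ?thesis using B(5) by simp
  qed
  have fid: "f s = s" if "s \<in> S" for s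
  proof -
    have "\<forall>b\<in>B. orthogonal (s - f s) b"
      using bf by (simp add: orthogonal_def inner_diff_right inner_commute)
    then have "\<forall>y\<in>span B. orthogonal (s - f s) y"
      using orthogonal_to_span by blast
    moreover have "s - f s \<in> span B" by (rule span_diff) (use B(5) that fS in auto)
    ultimately have "(s - f s) \<bullet> (s - f s) = 0" by (simp add: orthogonal_def)
    then show ?thesis by simp
  qed
  have "P ** P = P"
    using fS fid by (simp add: matrix_eq Pf flip: matrix_vector_mul_assoc)
  moreover have "transpose P = P"
    by (rule symmetric_matrixI)
      (simp add: Pf f_def inner_sum_left inner_sum_right mult.commute inner_commute)
  moreover have "range (\<lambda>x. P *v x) = S"
    using fS fid Pf by (metis image_subset_iff rangeI subsetI subset_antisym)
  ultimately show ?thesis by blast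
qed

lemma subspaces_meet_nontrivially:
  fixes S T U :: "'a::euclidean_space set"
  assumes "subspace S" "subspace T" "subspace U" "S \<subseteq> U" "T \<subseteq> U"
    and "dim U < dim S + dim T"
  shows "\<exists>z\<in>S \<inter> T. z \<noteq> 0"
proof -
  have "{x + y |x y. x \<in> S \<and> y \<in> T} \<subseteq> U"
    using assms(3-5) subspace_add by blast
  then have "dim {x + y |x y. x \<in> S \<and> y \<in> T} \<le> dim U" by (rule dim_subset)
  then have "dim (S \<inter> T) \<noteq> 0"
    using dim_sums_Int[OF assms(1,2)] assms(6) by linarith
  then show ?thesis by auto
qed

lemma nth_nonzero_in_span_image:
  fixes z :: "'i \<Rightarrow> real^'n"
  assumes "x \<in> span (z ` I)" "x $ w \<noteq> 0"
  shows "\<exists>i\<in>I. z i $ w \<noteq> 0"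
proof (rule ccontr)
  assume "\<not> ?thesis"
  then have "span (z ` I) \<subseteq> {x. x $ w = 0}"
    by (intro span_minimal) (auto simp: subspace_def)
  then show False using assms by blast
qed

lemma span_disjoint_supports_proportional:
  fixes z :: "'i \<Rightarrow> real^'n"
  assumes "x \<in> span (z ` I)" "i \<in> I" "z i $ w \<noteq> 0" "z i $ w' \<noteq> 0"
    and disjoint: "\<And>i j w. i \<in> I \<Longrightarrow> j \<in> I \<Longrightarrow> z i $ w \<noteq> 0 \<Longrightarrow> z j $ w \<noteq> 0 \<Longrightarrow> i = j"
  shows "x $ w * z i $ w' = x $ w' * z i $ w"
proof -
  have "z j $ w * z i $ w' = z j $ w' * z i $ w" if "j \<in> I" for j
  proof (cases "j = i")
    case False
    then have "z j $ w = 0" "z j $ w' = 0"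
      using disjoint[OF that assms(2)] assms(3,4) by blast+
    then show ?thesis by simp
  qed simp
  then have "span (z ` I) \<subseteq> {x. x $ w * z i $ w' = x $ w' * z i $ w}"
    by (intro span_minimal) (auto simp: subspace_def algebra_simps)
  then show ?thesis using assms(1) by blast
qed

lemma span_eq_if_disjoint_supports:
  fixes z :: "'i \<Rightarrow> real^'n"
  assumes "subspace S" "finite I" "dim S \<le> card I"
    and in_S: "\<And>i. i \<in> I \<Longrightarrow> z i \<in> S"
    and nonzero: "\<And>i. i \<in> I \<Longrightarrow> z i \<noteq> 0"
    and disjoint: "\<And>i j w. i \<in> I \<Longrightarrow> j \<in> I \<Longrightarrow> z i $ w \<noteq> 0 \<Longrightarrow> z j $ w \<noteq> 0 \<Longrightarrow> i = j"
  shows "S = span (z ` I)"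
proof -
  have inj: "inj_on z I"
    by (rule inj_onI) (metis disjoint nonzero vec_eq_iff zero_index)
  have "pairwise orthogonal (z ` I)"
    using disjoint unfolding pairwise_def orthogonal_def inner_vec_def
    by (force intro!: sum.neutral)
  moreover have "0 \<notin> z ` I" using nonzero by auto
  ultimately have indep: "independent (z ` I)" by (rule pairwise_orthogonal_independent)
  have sub: "z ` I \<subseteq> S" using in_S by blast
  have "card (z ` I) \<le> dim S"
    using independent_card_le_dim[OF sub indep] .
  then have "card (z ` I) = dim S"
    using assms(3) card_image[OF inj] by simp
  then have "S \<subseteq> span (z ` I)"
    using card_eq_dim[OF sub] indep assms(2) by blast
  moreover have "span (z ` I) \<subseteq> S"
    using sub assms(1) by (rule span_minimal)
  ultimately show ?thesis by blast
qed

lemma exists_poly_indicator: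
  fixes S :: "real set"
  assumes "finite S"
  shows "\<exists>p. poly p \<theta> = 1 \<and> (\<forall>\<mu>\<in>S. \<mu> \<noteq> \<theta> \<longrightarrow> poly p \<mu> = 0)"
proof -
  define q where "q = (\<Prod>\<mu>\<in>S-{\<theta>}. [:-\<mu>, 1:])"
  have q: "poly q x = (\<Prod>\<mu>\<in>S-{\<theta>}. x - \<mu>)" for x by (simp add: q_def poly_prod)
  have "poly q \<theta> \<noteq> 0" using assms by (simp add: q)
  then show ?thesis
    using assms by (intro exI[of _ "smult (1 / poly q \<theta>) q"]) (simp add: q)
qed

lemma zero_if_quadratic_bound:
  fixes b c :: real
  assumes "b \<ge> 0" and bound: "\<And>t. 2 * t * b \<le> t\<^sup>2 * c"
  shows "b = 0"
proof (rule ccontr)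
  assume "b \<noteq> 0"
  then have b: "b > 0" using assms(1) by simp
  define t where "t = b / (\<bar>c\<bar> + 1)"
  have t: "t > 0" using b by (simp add: t_def add_pos_nonneg)
  have "t * (2 * b) \<le> t * (t * c)"
    using bound[of t] by (simp add: power2_eq_square algebra_simps)
  then have "2 * b \<le> t * c" using t by simp
  also have "\<dots> \<le> t * \<bar>c\<bar>" using t by (simp add: mult_left_mono)
  also have "t * \<bar>c\<bar> < b"
    using b by (simp add: t_def field_simps)
  finally show False using b by simp
qed

lemma rayleigh_max_exists:
  fixes M :: "real^'n^'n"
  assumes W: "subspace W" and nz: "W \<noteq> {0}"
  shows "\<exists>x\<in>W. x \<bullet> x = 1 \<and> (\<forall>y\<in>W. y \<bullet> (M *v y) \<le> (x \<bullet> (M *v x)) * (y \<bullet> y))"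
proof -
  let ?S = "sphere 0 1 \<inter> W"
  have cpt: "compact ?S"
    using closed_subspace[OF W] compact_sphere by (rule compact_Int_closed[rotated])
  obtain w where w: "w \<in> W" "w \<noteq> 0" using nz W subspace_0 by blast
  then have "w /\<^sub>R norm w \<in> ?S" by (simp add: subspace_scale W)
  then have ne: "?S \<noteq> {}" by blast
  have "continuous_on ?S (\<lambda>y. y \<bullet> (M *v y))" by (intro continuous_intros)
  then obtain x where x: "x \<in> ?S" "\<forall>y\<in>?S. y \<bullet> (M *v y) \<le> x \<bullet> (M *v x)"
    using continuous_attains_sup[OF cpt ne] by blast
  have "y \<bullet> (M *v y) \<le> (x \<bullet> (M *v x)) * (y \<bullet> y)" if y: "y \<in> W" for y
  proof (cases "y = 0")
    case False
    have yS: "y /\<^sub>R norm y \<in> ?S" using y False by (simp add: subspace_scale W)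
    have q: "(y /\<^sub>R norm y) \<bullet> (M *v (y /\<^sub>R norm y)) = (y \<bullet> (M *v y)) / (norm y)\<^sup>2"
      by (simp add: matrix_vector_mult_scaleR power2_eq_square divide_inverse)
    have "(y \<bullet> (M *v y)) / (norm y)\<^sup>2 \<le> x \<bullet> (M *v x)"
      using bspec[OF x(2) yS] unfolding q .
    then have "y \<bullet> (M *v y) \<le> (x \<bullet> (M *v x)) * (norm y)\<^sup>2"
      using False by (simp add: divide_le_eq)
    then show ?thesis by (simp add: power2_norm_eq_inner)
  qed simp
  moreover have "x \<bullet> x = 1" using x(1) by (simp add: power2_norm_eq_inner[symmetric])
  ultimately show ?thesis using x(1) by blast
qed

text \<open>A maximiser of the Rayleigh quotient on an invariant subspace is an eigenvector:
  perturbing it by its residual \<open>w\<close> must not increase the quotient, which forces \<open>w = 0\<close>.\<close>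
lemma rayleigh_max_is_eigenvector:
  fixes M :: "real^'n^'n"
  assumes sym: "transpose M = M" and W: "subspace W"
    and inv: "\<And>w. w \<in> W \<Longrightarrow> M *v w \<in> W"
    and x: "x \<in> W" "x \<bullet> x = 1"
    and max: "\<And>y. y \<in> W \<Longrightarrow> y \<bullet> (M *v y) \<le> (x \<bullet> (M *v x)) * (y \<bullet> y)"
  shows "M *v x = (x \<bullet> (M *v x)) *\<^sub>R x"
proof -
  define l where "l = x \<bullet> (M *v x)"
  define w where "w = M *v x - l *\<^sub>R x"
  have wW: "w \<in> W" using W inv x by (simp add: w_def subspace_diff subspace_scale)
  have Mx: "M *v x = w + l *\<^sub>R x" by (simp add: w_def)
  have wx: "w \<bullet> x = 0"
    by (simp add: w_def inner_diff_left inner_diff_right x l_def inner_commute)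
  define b where "b = w \<bullet> w"
  have wMx: "w \<bullet> (M *v x) = b" by (simp add: Mx inner_add_right wx b_def)
  have xMw: "x \<bullet> (M *v w) = b"
    using wMx symmetric_matrix_inner[OF sym, of x w] by (simp add: inner_commute)
  have "2 * t * b \<le> t\<^sup>2 * (l * b - w \<bullet> (M *v w))" for t
  proof -
    let ?y = "x + t *\<^sub>R w"
    have "?y \<in> W" using W x wW by (simp add: subspace_add subspace_scale)
    then have le: "?y \<bullet> (M *v ?y) \<le> l * (?y \<bullet> ?y)" using max l_def by simp
    have e1: "?y \<bullet> (M *v ?y) = l + 2*t*b + t\<^sup>2 * (w \<bullet> (M *v w))"
      by (simp add: matrix_vector_right_distrib matrix_vector_mult_scaleR inner_add_left
          inner_add_right wMx xMw l_def power2_eq_square algebra_simps)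
    have e2: "?y \<bullet> ?y = 1 + t\<^sup>2 * b"
      by (simp add: inner_add_left inner_add_right x wx inner_commute b_def power2_eq_square)
    show ?thesis using le unfolding e1 e2 by (simp add: algebra_simps)
  qed
  then have "b = 0" by (intro zero_if_quadratic_bound) (simp_all add: b_def)
  then show ?thesis by (simp add: b_def w_def l_def)
qed

lemma invariant_subspace_has_eigenvector:
  fixes M :: "real^'n^'n"
  assumes "transpose M = M" "subspace W" "\<And>w. w \<in> W \<Longrightarrow> M *v w \<in> W" "W \<noteq> {0}"
  shows "\<exists>x\<in>W. x \<noteq> 0 \<and> (\<exists>l. M *v x = l *\<^sub>R x)"
proof -
  obtain x where x: "x \<in> W" "x \<bullet> x = 1"
     "\<forall>y\<in>W. y \<bullet> (M *v y) \<le> (x \<bullet> (M *v x)) * (y \<bullet> y)"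
    using rayleigh_max_exists[OF assms(2,4)] by blast
  moreover have "x \<noteq> 0" using x(2) by auto
  ultimately show ?thesis
    using rayleigh_max_is_eigenvector[OF assms(1-3) x(1,2)] by blast
qed

section \<open>Spectral decomposition of the adjacency matrix\<close>

locale undirected_graph =
  fixes adj :: "'n::finite \<Rightarrow> 'n \<Rightarrow> bool"
  assumes adj_sym: "adj x y = adj y x"
begin

abbreviation A where "A \<equiv> adj_matrix adj"
abbreviation E where "E \<theta> \<equiv> eproj adj \<theta>"
abbreviation eigenvalues where "eigenvalues \<equiv> {\<theta>. eigenvalue adj \<theta>}"

lemma A_symmetric: "transpose A = A"
  by (simp add: vec_eq_iff transpose_def adj_matrix_def adj_sym)

lemma A_inner: "(A *v x) \<bullet> y = x \<bullet> (A *v y)"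
  using symmetric_matrix_inner[OF A_symmetric] .

lemma A_mult_nth: "(A *v x) $ i = (\<Sum>j\<in>UNIV. if adj i j then x $ j else 0)"
  unfolding matrix_vector_mult_def adj_matrix_def by (auto intro!: sum.cong)

lemma subspace_eigenspace: "subspace (eigenspace adj \<theta>)"
  unfolding subspace_def eigenspace_def
  by (auto simp: matrix_vector_right_distrib matrix_vector_mult_scaleR scaleR_add_right)

lemma E_projection:
  "E \<theta> ** E \<theta> = E \<theta> \<and> transpose (E \<theta>) = E \<theta> \<and> range (\<lambda>x. E \<theta> *v x) = eigenspace adj \<theta>"
proof -
  obtain P where P: "P ** P = P" "transpose P = P" "range (\<lambda>x. P *v x) = eigenspace adj \<theta>"
    using projection_matrix_exists[OF subspace_eigenspace] by blast
  have "\<exists>!P. P ** P = P \<and> transpose P = P \<and> range (\<lambda>x. P *v x) = eigenspace adj \<theta>"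
  proof (rule ex1I[of _ P])
    fix Q assume "Q ** Q = Q \<and> transpose Q = Q \<and> range (\<lambda>x. Q *v x) = eigenspace adj \<theta>"
    then show "Q = P" using projection_matrix_unique[of Q P] P by metis
  qed (use P in blast)
  then show ?thesis unfolding eproj_def by (rule theI')
qed

lemma E_in_eigenspace: "E \<theta> *v x \<in> eigenspace adj \<theta>"
  using E_projection by blast

lemma E_fixes_eigenspace: "y \<in> eigenspace adj \<theta> \<Longrightarrow> E \<theta> *v y = y"
  using E_projection by (metis (no_types, lifting) imageE matrix_vector_mul_assoc)

lemma E_idem: "E \<theta> *v (E \<theta> *v x) = E \<theta> *v x"
  using E_fixes_eigenspace[OF E_in_eigenspace] .

lemma E_inner: "(E \<theta> *v x) \<bullet> y = x \<bullet> (E \<theta> *v y)"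
  using symmetric_matrix_inner E_projection by blast

lemma A_E: "A *v (E \<theta> *v x) = \<theta> *\<^sub>R (E \<theta> *v x)"
  using E_in_eigenspace unfolding eigenspace_def by blast

lemma E_A: "E \<theta> *v (A *v x) = \<theta> *\<^sub>R (E \<theta> *v x)"
proof (rule vector_eq_rdot[THEN iffD1], intro allI)
  fix y
  have "(E \<theta> *v (A *v x)) \<bullet> y = x \<bullet> (A *v (E \<theta> *v y))" by (simp add: E_inner A_inner)
  also have "\<dots> = (\<theta> *\<^sub>R (E \<theta> *v x)) \<bullet> y" by (simp add: A_E E_inner)
  finally show "(E \<theta> *v (A *v x)) \<bullet> y = (\<theta> *\<^sub>R (E \<theta> *v x)) \<bullet> y" .
qed

lemma eigenspaces_orthogonal:
  assumes "x \<in> eigenspace adj \<theta>" "y \<in> eigenspace adj \<mu>" "\<theta> \<noteq> \<mu>"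
  shows "x \<bullet> y = 0"
proof -
  have "\<theta> * (x \<bullet> y) = (A *v x) \<bullet> y" using assms(1) by (simp add: eigenspace_def)
  also have "\<dots> = x \<bullet> (A *v y)" by (rule A_inner)
  also have "\<dots> = \<mu> * (x \<bullet> y)" using assms(2) by (simp add: eigenspace_def)
  finally show ?thesis using assms(3) by simp
qed

lemma E_other_eigenspace:
  assumes "\<theta> \<noteq> \<mu>" "y \<in> eigenspace adj \<mu>"
  shows "E \<theta> *v y = 0"
proof -
  have "(E \<theta> *v y) \<bullet> (E \<theta> *v y) = y \<bullet> (E \<theta> *v y)" by (simp add: E_inner E_idem)
  also have "\<dots> = 0"
    using eigenspaces_orthogonal[OF E_in_eigenspace assms(2)] assms(1) by (simp add: inner_commute)
  finally show ?thesis by simp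
qed

lemma E_orthogonal: "\<theta> \<noteq> \<mu> \<Longrightarrow> (E \<theta> *v x) \<bullet> (E \<mu> *v x) = 0"
  by (simp add: E_inner E_other_eigenspace E_in_eigenspace)

lemma E_non_eigenvalue: "\<not> eigenvalue adj \<theta> \<Longrightarrow> E \<theta> *v x = 0"
  using E_in_eigenspace[of \<theta> x] unfolding eigenvalue_def eigenspace_def by auto

lemma finite_eigenvalues: "finite eigenvalues"
proof -
  have "\<forall>\<theta>\<in>eigenvalues. \<exists>x. x \<noteq> 0 \<and> x \<in> eigenspace adj \<theta>"
    unfolding eigenvalue_def eigenspace_def by auto
  then obtain g where g: "\<And>\<theta>. \<theta> \<in> eigenvalues \<Longrightarrow> g \<theta> \<noteq> 0 \<and> g \<theta> \<in> eigenspace adj \<theta>"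
    by metis
  have "pairwise orthogonal (g ` eigenvalues)"
    unfolding pairwise_def orthogonal_def using g eigenspaces_orthogonal by (metis imageE)
  moreover have "0 \<notin> g ` eigenvalues" using g by auto
  ultimately have "finite (g ` eigenvalues)"
    using pairwise_orthogonal_independent independent_imp_finite by blast
  moreover have "inj_on g eigenvalues"
    by (rule inj_onI) (metis g eigenspaces_orthogonal inner_eq_zero_iff)
  ultimately show ?thesis using finite_imageD by blast
qed

text \<open>The orthogonal complement of all eigenspaces is \<open>A\<close>-invariant and contains no
  eigenvector, so it is zero.\<close>
lemma spectral_decomposition: "x = (\<Sum>\<theta>\<in>eigenvalues. E \<theta> *v x)"
proof -
  define W where "W = {w. \<forall>\<mu> y. y \<in> eigenspace adj \<mu> \<longrightarrow> w \<bullet> y = 0}"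
  have "subspace W" unfolding subspace_def W_def by (auto simp: inner_add_left)
  moreover have "A *v w \<in> W" if "w \<in> W" for w
    using that by (auto simp: W_def A_inner eigenspace_def)
  moreover have "e = 0" if "e \<in> W" "A *v e = l *\<^sub>R e" for e l
  proof -
    have "e \<in> eigenspace adj l" using that(2) by (simp add: eigenspace_def)
    then have "e \<bullet> e = 0" using that(1) W_def by blast
    then show ?thesis by simp
  qed
  ultimately have W0: "W = {0}"
    using invariant_subspace_has_eigenvector[OF A_symmetric] by blast
  let ?z = "x - (\<Sum>\<theta>\<in>eigenvalues. E \<theta> *v x)"
  have "?z \<bullet> y = 0" if y: "y \<in> eigenspace adj \<mu>" for y \<mu>
  proof (cases "eigenvalue adj \<mu>")
    case True
    have "(\<Sum>\<theta>\<in>eigenvalues. E \<theta> *v x) \<bullet> y = (\<Sum>\<theta>\<in>eigenvalues. if \<theta> = \<mu> then x \<bullet> y else 0)"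
      unfolding inner_sum_left
      by (rule sum.cong) (auto simp: E_inner E_fixes_eigenspace[OF y] E_other_eigenspace[OF _ y])
    then show ?thesis using True finite_eigenvalues by (simp add: inner_diff_left)
  next
    case False
    then have "y = 0" using y unfolding eigenvalue_def eigenspace_def by auto
    then show ?thesis by simp
  qed
  then have "?z \<in> W" by (simp add: W_def)
  then show ?thesis using W0 by simp
qed

section \<open>Walks and Krylov spaces\<close>

definition A_pow :: "nat \<Rightarrow> real^'n \<Rightarrow> real^'n" where
  "A_pow k = ((*v) A ^^ k)"

lemma A_pow_0 [simp]: "A_pow 0 x = x" and A_pow_Suc: "A_pow (Suc k) x = A *v A_pow k x"
  by (simp_all add: A_pow_def)

lemma E_A_pow: "E \<theta> *v A_pow k x = \<theta>^k *\<^sub>R (E \<theta> *v x)"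
  by (induction k) (simp_all add: A_pow_Suc E_A)

lemma evec_nth: "evec u $ w = (if w = u then 1 else 0)"
  by (simp add: evec_def axis_def)

text \<open>\<open>(A^k e\<^sub>u)\<^sub>w\<close> counts the walks of length \<open>k\<close> from \<open>u\<close> to \<open>w\<close>.\<close>
lemma A_pow_evec_nonneg: "A_pow k (evec u) $ w \<ge> 0"
  by (induction k arbitrary: w) (simp_all add: evec_nth A_pow_Suc A_mult_nth sum_nonneg)

lemma A_pow_evec_pos_iff: "A_pow k (evec u) $ w > 0 \<longleftrightarrow> (adj ^^ k) u w"
proof (induction k arbitrary: w)
  case 0
  then show ?case by (simp add: evec_nth)
next
  case (Suc k)
  have "A_pow (Suc k) (evec u) $ w > 0 \<longleftrightarrow> (\<exists>j. adj w j \<and> A_pow k (evec u) $ j > 0)"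
    using A_pow_evec_nonneg[of k u]
    by (auto simp: A_pow_Suc A_mult_nth sum_nonneg_eq_0_iff less_le sum_nonneg)
  also have "\<dots> \<longleftrightarrow> (adj ^^ Suc k) u w"
    using Suc.IH adj_sym by (metis relpowp_Suc_E relpowp_Suc_I)
  finally show ?case .
qed

lemma A_pow_evec_nonzero_iff: "A_pow k (evec u) $ w \<noteq> 0 \<longleftrightarrow> (adj ^^ k) u w"
  using A_pow_evec_nonneg[of k u w] A_pow_evec_pos_iff[of k u w] by linarith

definition krylov :: "real^'n \<Rightarrow> (real^'n) set" where
  "krylov x = span (range (\<lambda>k. A_pow k x))"

definition krylov_upto :: "real^'n \<Rightarrow> nat \<Rightarrow> (real^'n) set" where
  "krylov_upto x i = span ((\<lambda>k. A_pow k x) ` {..i})"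

lemma subspace_krylov: "subspace (krylov x)"
  and subspace_krylov_upto: "subspace (krylov_upto x i)"
  by (simp_all add: krylov_def krylov_upto_def)

lemma krylov_upto_subset: "krylov_upto x i \<subseteq> krylov x"
  unfolding krylov_def krylov_upto_def by (intro span_mono) auto

lemma krylov_invariant: "y \<in> krylov x \<Longrightarrow> A *v y \<in> krylov x"
proof -
  have "krylov x \<subseteq> {y. A *v y \<in> krylov x}"
    unfolding krylov_def
  proof (rule span_minimal)
    show "range (\<lambda>k. A_pow k x) \<subseteq> {y. A *v y \<in> span (range (\<lambda>k. A_pow k x))}"
      by (auto simp: A_pow_Suc[symmetric] intro!: span_base)
    show "subspace {y. A *v y \<in> span (range (\<lambda>k. A_pow k x))}"
      by (auto simp: subspace_def matrix_vector_right_distrib matrix_vector_mult_scaleR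
          span_add span_scale span_zero)
  qed
  then show "y \<in> krylov x \<Longrightarrow> A *v y \<in> krylov x" by blast
qed

lemma krylov_minimal:
  assumes "subspace Q" "\<And>q. q \<in> Q \<Longrightarrow> A *v q \<in> Q" "x \<in> Q"
  shows "krylov x \<subseteq> Q"
  unfolding krylov_def
proof (rule span_minimal[OF _ assms(1)])
  have "A_pow k x \<in> Q" for k by (induction k) (use assms in \<open>auto simp: A_pow_Suc\<close>)
  then show "range (\<lambda>k. A_pow k x) \<subseteq> Q" by auto
qed

lemma krylov_upto_support:
  assumes "y \<in> krylov_upto (evec u) i" "y $ w \<noteq> 0"
  shows "gdist adj u w \<le> i"
proof (rule ccontr)
  assume far: "\<not> gdist adj u w \<le> i"
  have "krylov_upto (evec u) i \<subseteq> {y. y $ w = 0}"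
    unfolding krylov_upto_def
  proof (rule span_minimal)
    have "A_pow k (evec u) $ w = 0" if "k \<le> i" for k
      using far that A_pow_evec_nonzero_iff[of k u w] unfolding gdist_def
      by (meson Least_le le_trans)
    then show "(\<lambda>k. A_pow k (evec u)) ` {..i} \<subseteq> {y. y $ w = 0}" by auto
  qed (auto simp: subspace_def)
  then show False using assms by blast
qed

lemma E_in_krylov: "E \<theta> *v x \<in> krylov x"
proof (cases "eigenvalue adj \<theta>")
  case False
  then show ?thesis by (simp add: E_non_eigenvalue krylov_def span_zero)
next
  case True
  obtain p where p: "poly p \<theta> = 1" "\<forall>\<mu>\<in>eigenvalues. \<mu> \<noteq> \<theta> \<longrightarrow> poly p \<mu> = 0"
    using exists_poly_indicator[OF finite_eigenvalues] by blast
  define y where "y = (\<Sum>i\<le>degree p. coeff p i *\<^sub>R A_pow i x)"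
  have y: "y \<in> krylov x"
    unfolding y_def krylov_def by (intro span_sum span_scale span_base) auto
  have E_y: "E \<mu> *v y = poly p \<mu> *\<^sub>R (E \<mu> *v x)" for \<mu>
  proof -
    have "E \<mu> *v y = (\<Sum>i\<le>degree p. E \<mu> *v (coeff p i *\<^sub>R A_pow i x))"
      unfolding y_def by (rule linear_sum[OF matrix_vector_mul_linear])
    then show ?thesis
      by (simp add: matrix_vector_mult_scaleR E_A_pow poly_altdef scaleR_sum_left)
  qed
  have "y = (\<Sum>\<mu>\<in>eigenvalues. if \<mu> = \<theta> then E \<theta> *v x else 0)"
    by (subst spectral_decomposition) (auto simp: E_y p intro!: sum.cong)
  also have "\<dots> = E \<theta> *v x" using True finite_eigenvalues by simp
  finally show ?thesis using y by simp
qed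

lemma eig_support_subset: "eig_support adj u \<subseteq> eigenvalues"
  unfolding eig_support_def by auto

lemma krylov_evec_eq_span_E: "krylov (evec u) = span ((\<lambda>\<theta>. E \<theta> *v evec u) ` eig_support adj u)"
proof
  have "A_pow k (evec u) = (\<Sum>\<mu>\<in>eigenvalues. \<mu>^k *\<^sub>R (E \<mu> *v evec u))" for k
    by (subst spectral_decomposition) (simp add: E_A_pow)
  moreover have "\<mu>^k *\<^sub>R (E \<mu> *v evec u) \<in> span ((\<lambda>\<theta>. E \<theta> *v evec u) ` eig_support adj u)"
    if "\<mu> \<in> eigenvalues" for \<mu> k
    using that by (cases "E \<mu> *v evec u = 0")
      (auto simp: eig_support_def span_zero intro!: span_scale[OF span_base])
  ultimately show "krylov (evec u) \<subseteq> span ((\<lambda>\<theta>. E \<theta> *v evec u) ` eig_support adj u)"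
    unfolding krylov_def by (intro span_minimal subspace_span) (auto intro!: span_sum)
  show "span ((\<lambda>\<theta>. E \<theta> *v evec u) ` eig_support adj u) \<subseteq> krylov (evec u)"
    unfolding krylov_def by (rule span_minimal) (auto simp: E_in_krylov[unfolded krylov_def])
qed

lemma dim_krylov_evec: "dim (krylov (evec u)) = card (eig_support adj u)"
proof -
  let ?F = "(\<lambda>\<theta>. E \<theta> *v evec u) ` eig_support adj u"
  have inj: "inj_on (\<lambda>\<theta>. E \<theta> *v evec u) (eig_support adj u)"
  proof (rule inj_onI, rule ccontr)
    fix a b assume b: "b \<in> eig_support adj u" and "E a *v evec u = E b *v evec u" "a \<noteq> b"
    then have "(E b *v evec u) \<bullet> (E b *v evec u) = 0"
      using E_orthogonal[of a b "evec u"] by simp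
    then show False using b by (simp add: eig_support_def)
  qed
  have "pairwise orthogonal ?F"
  proof (rule pairwiseI)
    fix x y assume "x \<in> ?F" "y \<in> ?F" "x \<noteq> y"
    then obtain a b where "x = E a *v evec u" "y = E b *v evec u" "a \<noteq> b" by blast
    then show "orthogonal x y" by (simp add: orthogonal_def E_orthogonal)
  qed
  moreover have "0 \<notin> ?F" by (auto simp: eig_support_def)
  ultimately have "independent ?F" by (rule pairwise_orthogonal_independent)
  then show ?thesis
    by (simp add: krylov_evec_eq_span_E dim_eq_card_independent card_image[OF inj])
qed

lemma eig_support_nonempty: "eig_support adj u \<noteq> {}"
proof
  assume "eig_support adj u = {}"
  then have "(\<Sum>\<theta>\<in>eigenvalues. E \<theta> *v evec u) = 0"
    by (intro sum.neutral) (auto simp: eig_support_def)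
  then show False using spectral_decomposition[of "evec u"] by (simp add: evec_def)
qed

lemma dim_krylov_evec_dual_degree: "dim (krylov (evec u)) = dual_degree adj u + 1"
proof -
  have "finite (eig_support adj u)"
    using eig_support_subset finite_eigenvalues by (rule finite_subset)
  then have "card (eig_support adj u) > 0"
    using eig_support_nonempty by (simp add: card_gt_0_iff)
  then show ?thesis by (simp add: dim_krylov_evec dual_degree_def)
qed

lemma E_diag: "E \<theta> $ v $ v = (E \<theta> *v evec v) \<bullet> (E \<theta> *v evec v)"
  by (simp add: E_inner E_idem evec_def inner_axis' matrix_vector_mul_component inner_axis)

lemma E_krylov_multiple: "y \<in> krylov (evec u) \<Longrightarrow> \<exists>c. E \<theta> *v y = c *\<^sub>R (E \<theta> *v evec u)"
proof -
  let ?T = "{y. E \<theta> *v y \<in> span {E \<theta> *v evec u}}"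
  have "krylov (evec u) \<subseteq> ?T"
    unfolding krylov_def
  proof (rule span_minimal)
    show "range (\<lambda>k. A_pow k (evec u)) \<subseteq> ?T"
      by (auto simp: E_A_pow intro!: span_scale[OF span_base])
    show "subspace ?T"
      unfolding subspace_def
      by (simp add: matrix_vector_right_distrib matrix_vector_mult_scaleR span_add span_scale span_zero)
  qed
  then show "y \<in> krylov (evec u) \<Longrightarrow> ?thesis" by (auto simp: span_singleton)
qed

text \<open>Given \<open>e\<^sub>v \<in> krylov e\<^sub>u\<close>, each \<open>E\<^sub>\<theta> e\<^sub>v\<close> is a multiple of \<open>E\<^sub>\<theta> e\<^sub>u\<close>, and cospectrality
  says that the two have the same norm; so the multiple is \<open>\<plusminus>1\<close>.\<close>
lemma strongly_cospectral_iff: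
  "strongly_cospectral adj u v \<longleftrightarrow> cospectral adj u v \<and> evec v \<in> krylov (evec u)"
proof (intro iffI conjI)
  assume sc: "strongly_cospectral adj u v"
  have pm: "E \<theta> *v evec v = E \<theta> *v evec u \<or> E \<theta> *v evec v = - (E \<theta> *v evec u)"
    if "eigenvalue adj \<theta>" for \<theta>
    using sc that unfolding strongly_cospectral_def by force
  then show "cospectral adj u v"
    unfolding cospectral_def
    by (metis (no_types) E_diag inner_minus_left inner_minus_right minus_minus)
  have "E \<theta> *v evec v \<in> krylov (evec u)" if "\<theta> \<in> eigenvalues" for \<theta>
    using pm[of \<theta>] that E_in_krylov[of \<theta> "evec u"] unfolding krylov_def
    by (auto intro: span_neg)
  then have "(\<Sum>\<theta>\<in>eigenvalues. E \<theta> *v evec v) \<in> krylov (evec u)"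
    unfolding krylov_def by (rule span_sum)
  then show "evec v \<in> krylov (evec u)" by (simp flip: spectral_decomposition)
next
  assume "cospectral adj u v \<and> evec v \<in> krylov (evec u)"
  then have co: "cospectral adj u v" and v: "evec v \<in> krylov (evec u)" by auto
  show "strongly_cospectral adj u v"
    unfolding strongly_cospectral_def
  proof (intro allI impI)
    fix \<theta> assume \<theta>: "eigenvalue adj \<theta>"
    let ?a = "E \<theta> *v evec u"
    obtain c where c: "E \<theta> *v evec v = c *\<^sub>R ?a" using E_krylov_multiple[OF v] by blast
    have "?a \<bullet> ?a = (c *\<^sub>R ?a) \<bullet> (c *\<^sub>R ?a)"
      using co \<theta> c unfolding cospectral_def by (metis E_diag)
    then have "?a = 0 \<or> c\<^sup>2 = 1" by (simp add: power2_eq_square)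
    then show "?a = E \<theta> *v evec v \<or> ?a = - (E \<theta> *v evec v)"
      using c by (auto simp: power2_eq_1_iff)
  qed
qed

end

section \<open>Perron vector and distances in connected graphs\<close>

locale connected_undirected_graph = undirected_graph adj
  for adj :: "'n::finite \<Rightarrow> 'n \<Rightarrow> bool" +
  assumes connected: "connected_graph adj"
begin

lemma walk_exists: "\<exists>n. (adj ^^ n) u w"
  using connected unfolding connected_graph_def by blast

lemma nonneg_eigenvector_zero_entry:
  assumes nonneg: "\<And>i. y $ i \<ge> 0" and eig: "A *v y = l *\<^sub>R y" and zero: "y $ k = 0"
  shows "y = 0"
proof -
  have step: "y $ j = 0" if "y $ w = 0" "adj w j" for w j
  proof -
    have "(\<Sum>j\<in>UNIV. if adj w j then y $ j else 0) = 0"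
      using eig that(1) by (metis A_mult_nth scaleR_eq_0_iff vector_scaleR_component)
    moreover have "(if adj w j then y $ j else 0) \<le> (\<Sum>j\<in>UNIV. if adj w j then y $ j else 0)"
      by (rule member_le_sum) (auto simp: nonneg)
    ultimately show ?thesis using nonneg[of j] that(2) by simp
  qed
  have "(adj ^^ n) k w \<Longrightarrow> y $ w = 0" for n w
  proof (induction n arbitrary: w)
    case 0
    then show ?case using zero by simp
  next
    case (Suc n)
    then show ?case using step by (metis relpowp_Suc_E)
  qed
  then show ?thesis using walk_exists by (metis vec_eq_iff zero_index)
qed

lemma quadratic_form_A: "x \<bullet> (A *v x) = (\<Sum>i\<in>UNIV. \<Sum>j\<in>UNIV. if adj i j then x$i * x$j else 0)"
  unfolding inner_vec_def A_mult_nth by (simp add: sum_distrib_left if_distrib cong: if_cong)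

text \<open>Replacing a maximiser \<open>x\<close> of the Rayleigh quotient by \<open>|x|\<close> does not decrease the quotient,
  so \<open>|x|\<close> is a nonnegative eigenvector for the largest eigenvalue; by connectivity it has no
  zero entry.\<close>
lemma perron_eigenvector_exists: "\<exists>\<phi>. (\<forall>i. \<phi> $ i > 0) \<and> A *v \<phi> = Max eigenvalues *\<^sub>R \<phi>"
proof -
  have "(UNIV :: (real^'n) set) \<noteq> {0}"
    by (metis axis_nth singletonD UNIV_I zero_index zero_neq_one)
  then obtain x where x: "x \<bullet> x = 1" "\<forall>y. y \<bullet> (A *v y) \<le> (x \<bullet> (A *v x)) * (y \<bullet> y)"
    using rayleigh_max_exists[of UNIV] by auto
  define y where "y = (\<chi> i. \<bar>x $ i\<bar>)"
  have yy: "y \<bullet> y = 1" using x(1) by (simp add: y_def inner_vec_def)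
  have "x \<bullet> (A *v x) \<le> y \<bullet> (A *v y)"
    unfolding quadratic_form_A y_def by (intro sum_mono) (auto simp: abs_mult[symmetric])
  then have max: "z \<bullet> (A *v z) \<le> (y \<bullet> (A *v y)) * (z \<bullet> z)" for z
    using x(2) by (meson inner_ge_zero mult_right_mono order_trans)
  have eig: "A *v y = (y \<bullet> (A *v y)) *\<^sub>R y"
    using rayleigh_max_is_eigenvector[OF A_symmetric, of UNIV y] max yy by auto
  have pos: "y $ i > 0" for i
    using nonneg_eigenvector_zero_entry[OF _ eig, of i] yy by (force simp: y_def)
  have "Max eigenvalues = y \<bullet> (A *v y)"
  proof (rule Max_eqI[OF finite_eigenvalues])
    fix \<mu> assume "\<mu> \<in> eigenvalues"
    then obtain v where v: "v \<noteq> 0" "A *v v = \<mu> *\<^sub>R v" by (auto simp: eigenvalue_def)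
    have "\<mu> * (v \<bullet> v) = v \<bullet> (A *v v)" using v by simp
    also have "\<dots> \<le> (y \<bullet> (A *v y)) * (v \<bullet> v)" by (rule max)
    finally show "\<mu> \<le> y \<bullet> (A *v y)" using v by (simp add: mult_le_cancel_right)
  next
    show "y \<bullet> (A *v y) \<in> eigenvalues"
  proof -
    have "y \<noteq> 0" using yy by auto
    then show ?thesis using eig by (auto simp: eigenvalue_def)
  qed
  qed
  then show ?thesis using pos eig by auto
qed

abbreviation perron where "perron \<equiv> perron_vec adj"

lemma perron: "(\<forall>i. perron $ i > 0) \<and> A *v perron = Max eigenvalues *\<^sub>R perron"
  unfolding perron_vec_def using perron_eigenvector_exists by (rule someI_ex)

lemma perron_pos: "perron $ i > 0" and perron_eigen: "A *v perron = Max eigenvalues *\<^sub>R perron"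
  using perron by blast+

lemma perron_eigenspace:
  assumes "A *v x = Max eigenvalues *\<^sub>R x"
  shows "\<exists>c. x = c *\<^sub>R perron"
proof -
  define r where "r i = x $ i / perron $ i" for i
  have "Min (range r) \<in> range r" by (rule Min_in) simp_all
  then obtain k where "r k = Min (range r)" by (metis rangeE)
  then have k: "r k \<le> r i" for i by simp
  define y where "y = x - r k *\<^sub>R perron"
  have "y $ i \<ge> 0" for i
    using k[of i] perron_pos[of i] by (simp add: y_def r_def pos_le_divide_eq)
  moreover have "A *v y = Max eigenvalues *\<^sub>R y"
    using assms perron_eigen
    by (simp add: y_def matrix_vector_mult_diff_distrib matrix_vector_mult_scaleR algebra_simps)
  moreover have "y $ k = 0" using perron_pos[of k] by (simp add: y_def r_def)
  ultimately have "y = 0" by (rule nonneg_eigenvector_zero_entry)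
  then show ?thesis unfolding y_def by auto
qed

lemma perron_in_krylov: "perron \<in> krylov (evec u)"
proof -
  define x where "x = E (Max eigenvalues) *v evec u"
  have "A *v x = Max eigenvalues *\<^sub>R x" unfolding x_def by (rule A_E)
  then obtain c where c: "x = c *\<^sub>R perron" using perron_eigenspace by blast
  have "perron \<in> eigenspace adj (Max eigenvalues)"
    using perron_eigen by (simp add: eigenspace_def)
  then have "x \<bullet> perron = perron $ u"
    by (simp add: x_def E_inner E_fixes_eigenspace evec_def inner_axis')
  then have "c \<noteq> 0" using c perron_pos[of u] by auto
  then have "perron = (1 / c) *\<^sub>R x" using c by simp
  then show ?thesis using E_in_krylov[of "Max eigenvalues" "evec u"]
    unfolding x_def krylov_def by (metis span_scale)
qed

lemma gdist_walk: "(adj ^^ gdist adj u w) u w"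
  unfolding gdist_def using walk_exists by (rule LeastI_ex)

lemma gdist_le: "(adj ^^ n) u w \<Longrightarrow> gdist adj u w \<le> n"
  unfolding gdist_def by (rule Least_le)

lemma walk_converse: "(adj ^^ n) u w \<Longrightarrow> (adj ^^ n) w u"
proof (induction n arbitrary: w)
  case (Suc n)
  from Suc.prems obtain m where "(adj ^^ n) u m" "adj m w" by (rule relpowp_Suc_E)
  then show ?case using Suc.IH adj_sym relpowp_Suc_I2 by metis
qed simp

lemma gdist_sym: "gdist adj u w = gdist adj w u"
  by (meson antisym gdist_le gdist_walk walk_converse)

lemma gdist_triangle: "gdist adj u w \<le> gdist adj u x + gdist adj x w"
  using gdist_le gdist_walk relpowp_add by (metis relcompp.relcompI)

lemma gdist_eq_0_iff: "gdist adj u w = 0 \<longleftrightarrow> w = u"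
  using gdist_walk[of u w] gdist_le[of 0 u u] by auto

lemma gdist_le_ecc: "gdist adj u w \<le> ecc adj u"
  unfolding ecc_def by simp

lemma exists_at_distance:
  assumes "k \<le> ecc adj u"
  shows "\<exists>w. gdist adj u w = k"
proof -
  have "ecc adj u \<in> range (gdist adj u)" unfolding ecc_def by (rule Max_in) auto
  then obtain w where w: "gdist adj u w = ecc adj u" by auto
  obtain x where x: "(adj ^^ k) u x" "(adj ^^ (ecc adj u - k)) x w"
    using gdist_walk[of u w] assms w by (metis le_add_diff_inverse relcompp.cases relpowp_add)
  have "gdist adj u w \<le> gdist adj u x + gdist adj x w" by (rule gdist_triangle)
  then have "gdist adj u x = k" using gdist_le[OF x(1)] gdist_le[OF x(2)] w assms by linarith
  then show ?thesis ..
qed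

lemma range_gdist: "range (gdist adj u) = {..ecc adj u}"
  using gdist_le_ecc exists_at_distance by (auto simp: image_iff) (metis eq_commute)

lemma distance_partition_eq: "distance_partition adj u = (\<lambda>i. {w. gdist adj u w = i}) ` {..ecc adj u}"
  unfolding distance_partition_def range_gdist ..

lemma singleton_in_distance_partition: "{u} \<in> distance_partition adj u"
proof -
  have "{w. gdist adj u w = 0} \<in> distance_partition adj u"
    unfolding distance_partition_eq by (rule imageI) simp
  moreover have "{w. gdist adj u w = 0} = {u}" by (auto simp: gdist_eq_0_iff)
  ultimately show ?thesis by simp
qed

lemma is_partition_distance_partition: "is_partition (distance_partition adj u)"
  unfolding is_partition_def distance_partition_def by (intro conjI) auto

lemma distance_partitions_eq:
  assumes "\<And>w. gdist adj u w + gdist adj v w = gdist adj u v"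
  shows "distance_partition adj u = distance_partition adj v"
proof -
  have "{w'. gdist adj u w' = gdist adj u w} = {w'. gdist adj v w' = gdist adj v w}" for w
  proof (intro set_eqI)
    fix w'
    show "w' \<in> {w'. gdist adj u w' = gdist adj u w} \<longleftrightarrow> w' \<in> {w'. gdist adj v w' = gdist adj v w}"
      using assms[of w] assms[of w'] by auto
  qed
  then show ?thesis
    unfolding distance_partition_def image_image by simp
qed

lemma dim_krylov_upto: "i \<le> ecc adj u \<Longrightarrow> i + 1 \<le> dim (krylov_upto (evec u) i)"
proof (induction i)
  case 0
  then show ?case by (simp add: krylov_upto_def dim_insert evec_def)
next
  case (Suc i)
  obtain w where w: "gdist adj u w = Suc i" using exists_at_distance Suc.prems by blast
  have "A_pow (Suc i) (evec u) $ w \<noteq> 0" using A_pow_evec_nonzero_iff gdist_walk w by metis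
  then have "A_pow (Suc i) (evec u) \<notin> krylov_upto (evec u) i"
    using krylov_upto_support w by fastforce
  then show ?case
    using Suc by (simp add: krylov_upto_def atMost_Suc dim_insert)
qed

lemma ecc_le_dual_degree: "ecc adj u \<le> dual_degree adj u"
proof -
  have "ecc adj u + 1 \<le> dim (krylov_upto (evec u) (ecc adj u))" by (rule dim_krylov_upto) simp
  also have "\<dots> \<le> dim (krylov (evec u))" by (rule dim_subset[OF krylov_upto_subset])
  finally show ?thesis by (simp add: dim_krylov_evec_dual_degree)
qed

section \<open>Layer vectors\<close>

definition layer_vec :: "'n \<Rightarrow> nat \<Rightarrow> real^'n" where
  "layer_vec u i = (\<chi> w. if gdist adj u w = i then perron $ w else 0)"

definition layer_space :: "'n \<Rightarrow> (real^'n) set" where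
  "layer_space u = span (layer_vec u ` {..ecc adj u})"

lemma layer_vec_in_layer_space: "i \<le> ecc adj u \<Longrightarrow> layer_vec u i \<in> layer_space u"
  unfolding layer_space_def by (intro span_base) simp

lemma dim_layer_space: "dim (layer_space u) \<le> ecc adj u + 1"
proof -
  have "dim (layer_space u) \<le> card (layer_vec u ` {..ecc adj u})"
    unfolding layer_space_def dim_span by (rule dim_le_card') simp
  also have "\<dots> \<le> ecc adj u + 1" using card_image_le[of "{..ecc adj u}"] by simp
  finally show ?thesis .
qed

lemma evec_in_layer_space:
  assumes "{w. gdist adj u w = i} = {v}"
  shows "evec v \<in> layer_space u"
proof -
  have "gdist adj u v = i" using assms by blast
  then have "i \<le> ecc adj u" using gdist_le_ecc by metis
  moreover have "layer_vec u i = perron $ v *\<^sub>R evec v"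
    using assms by (auto simp: vec_eq_iff layer_vec_def evec_nth)
  ultimately have "perron $ v *\<^sub>R evec v \<in> layer_space u" using layer_vec_in_layer_space by metis
  then have "(1 / perron $ v) *\<^sub>R (perron $ v *\<^sub>R evec v) \<in> layer_space u"
    unfolding layer_space_def by (rule span_scale)
  then show ?thesis using perron_pos[of v] by simp
qed

lemma A_layer_vec_nth:
  "(A *v layer_vec u j) $ x = perron $ x * (\<Sum>y\<in>{w. gdist adj u w = j}. scaled_adj adj x y)"
proof -
  have "(A *v layer_vec u j) $ x = (\<Sum>y\<in>{w. gdist adj u w = j}. A $ x $ y * perron $ y)"
    by (simp add: matrix_vector_mult_def layer_vec_def if_distrib sum.inter_filter[symmetric]
        cong: if_cong)
  also have "\<dots> = perron $ x * (\<Sum>y\<in>{w. gdist adj u w = j}. scaled_adj adj x y)"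
    using perron_pos[of x] by (simp add: scaled_adj_def sum_distrib_left)
  finally show ?thesis .
qed

text \<open>Pseudo equitability of the distance partition says that \<open>A\<close> maps each layer vector to a
  vector which, divided by the Perron vector, is constant on every layer.\<close>
lemma A_layer_vec_in_layer_space:
  assumes pe: "pseudo_equitable adj (distance_partition adj u)"
  shows "A *v layer_vec u j \<in> layer_space u"
proof (cases "j \<le> ecc adj u")
  case False
  then have "layer_vec u j = 0" using gdist_le_ecc[of u] by (auto simp: vec_eq_iff layer_vec_def)
  then show ?thesis by (simp add: layer_space_def span_zero)
next
  case True
  let ?s = "\<lambda>x. \<Sum>y\<in>{w. gdist adj u w = j}. scaled_adj adj x y"
  have layer_in: "{w. gdist adj u w = k} \<in> distance_partition adj u" if "k \<le> ecc adj u" for k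
    unfolding distance_partition_eq using that by (intro image_eqI[where x=k]) auto
  have pe': "(\<Sum>y\<in>C. scaled_adj adj x y) = (\<Sum>y\<in>C. scaled_adj adj x' y)"
    if "C \<in> distance_partition adj u" "C' \<in> distance_partition adj u" "x \<in> C'" "x' \<in> C'"
    for C C' x x'
    using pe that unfolding pseudo_equitable_def by blast
  have same: "?s x = ?s x'" if "gdist adj u x = gdist adj u x'" for x x'
    by (rule pe'[OF layer_in[OF True] layer_in[OF gdist_le_ecc[of u x]]]) (use that in simp_all)
  have const: "?s x = ?s (SOME x'. gdist adj u x' = gdist adj u x)" for x
    by (rule same) (metis (mono_tags) someI)
  define g where "g k = ?s (SOME x'. gdist adj u x' = k)" for k
  have "A *v layer_vec u j = (\<Sum>k\<le>ecc adj u. g k *\<^sub>R layer_vec u k)"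
  proof (subst vec_eq_iff, intro allI)
    fix x
    have "(\<Sum>k\<le>ecc adj u. g k *\<^sub>R layer_vec u k) $ x
        = (\<Sum>k\<le>ecc adj u. if k = gdist adj u x then g k * perron $ x else 0)"
      unfolding sum_component by (rule sum.cong) (simp_all add: layer_vec_def)
    also have "\<dots> = perron $ x * ?s x" using const[of x] gdist_le_ecc[of u x] by (simp add: g_def)
    finally show "(A *v layer_vec u j) $ x = (\<Sum>k\<le>ecc adj u. g k *\<^sub>R layer_vec u k) $ x"
      by (simp add: A_layer_vec_nth)
  qed
  also have "\<dots> \<in> layer_space u"
    unfolding layer_space_def by (intro span_sum span_scale span_base) auto
  finally show ?thesis .
qed

lemma pseudo_equitable_distance_partitionI:
  assumes inv: "\<And>j. j \<le> ecc adj u \<Longrightarrow> A *v layer_vec u j \<in> layer_space u"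
  shows "pseudo_equitable adj (distance_partition adj u)"
proof -
  define R where "R = {y. \<forall>x x'. gdist adj u x = gdist adj u x' \<longrightarrow>
                                        y $ x * perron $ x' = y $ x' * perron $ x}"
  have "subspace R" unfolding subspace_def R_def by (simp add: algebra_simps)
  moreover have "layer_vec u ` {..ecc adj u} \<subseteq> R"
    by (auto simp: R_def layer_vec_def mult.commute)
  ultimately have "layer_space u \<subseteq> R" unfolding layer_space_def by (rule span_minimal[rotated])
  have "(\<Sum>y\<in>C. scaled_adj adj x y) = (\<Sum>y\<in>C. scaled_adj adj x' y)"
    if "j \<le> ecc adj u" "C = {w. gdist adj u w = j}" "gdist adj u x = gdist adj u x'" for j C x x'
  proof -
    have "A *v layer_vec u j \<in> R" using inv that(1) \<open>layer_space u \<subseteq> R\<close> by blast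
    then have "(A *v layer_vec u j) $ x * perron $ x' = (A *v layer_vec u j) $ x' * perron $ x"
      using that(3) unfolding R_def by blast
    then have "perron $ x * (\<Sum>y\<in>C. scaled_adj adj x y) * perron $ x'
             = perron $ x' * (\<Sum>y\<in>C. scaled_adj adj x' y) * perron $ x"
      by (simp only: A_layer_vec_nth that(2))
    then show ?thesis using perron_pos[of x] perron_pos[of x'] by simp
  qed
  then show ?thesis
    unfolding pseudo_equitable_def using is_partition_distance_partition
    by (auto simp: distance_partition_eq)
qed

lemma pseudo_equitable_iff_krylov_eq_layer_space:
  "pseudo_equitable adj (distance_partition adj u) \<longleftrightarrow> krylov (evec u) = layer_space u"
proof
  assume pe: "pseudo_equitable adj (distance_partition adj u)"
  have "layer_space u \<subseteq> {y. A *v y \<in> layer_space u}"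
    unfolding layer_space_def
    by (rule span_minimal)
      (auto simp: subspace_def matrix_vector_right_distrib matrix_vector_mult_scaleR
        span_add span_scale span_zero A_layer_vec_in_layer_space[OF pe, unfolded layer_space_def])
  moreover have "evec u \<in> layer_space u"
    by (rule evec_in_layer_space[where i = 0]) (auto simp: gdist_eq_0_iff)
  ultimately have sub: "krylov (evec u) \<subseteq> layer_space u"
    by (intro krylov_minimal) (auto simp: layer_space_def)
  have "dim (layer_space u) \<le> dim (krylov (evec u))"
    using dim_layer_space[of u] ecc_le_dual_degree[of u] dim_krylov_evec_dual_degree[of u] by linarith
  then show "krylov (evec u) = layer_space u"
    using dim_eq_span[OF sub] by (simp add: krylov_def layer_space_def span_span)
next
  assume eq: "krylov (evec u) = layer_space u"
  show "pseudo_equitable adj (distance_partition adj u)"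
    using krylov_invariant[of _ "evec u"] layer_vec_in_layer_space[of _ u]
    by (intro pseudo_equitable_distance_partitionI) (simp add: eq)
qed

lemma spectrally_extremal_if_krylov_eq_layer_space:
  "krylov (evec u) = layer_space u \<Longrightarrow> spectrally_extremal adj u"
  using dim_layer_space[of u] ecc_le_dual_degree[of u] dim_krylov_evec_dual_degree[of u]
  by (simp add: spectrally_extremal_def)

section \<open>Antipodal vertices\<close>

lemma antipodal_imp_extremal_strongly_cospectral:
  assumes "antipodal adj u v"
  shows "spectrally_extremal adj u \<and> spectrally_extremal adj v \<and> strongly_cospectral adj u v"
proof -
  obtain P where P: "pseudo_equitable adj P" "P = distance_partition adj u"
      "P = distance_partition adj v" "{v} \<in> P" and co: "cospectral adj u v"
    using assms unfolding antipodal_def by blast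
  have Ku: "krylov (evec u) = layer_space u"
    using P(1,2) by (simp add: pseudo_equitable_iff_krylov_eq_layer_space)
  have Kv: "krylov (evec v) = layer_space v"
    using P(1,3) by (simp add: pseudo_equitable_iff_krylov_eq_layer_space)
  from P(4) obtain i where "{v} = {w. gdist adj u w = i}"
    unfolding P(2) distance_partition_def by blast
  then have "evec v \<in> krylov (evec u)" unfolding Ku by (intro evec_in_layer_space) simp
  then show ?thesis
    using Ku Kv co spectrally_extremal_if_krylov_eq_layer_space strongly_cospectral_iff by blast
qed

lemma geodesic_vector_in_krylov:
  assumes ext: "spectrally_extremal adj u" and v: "evec v \<in> krylov (evec u)"
    and uv: "gdist adj u v = ecc adj u" and i: "i \<le> gdist adj u v"
  shows "\<exists>z\<in>krylov (evec u). z \<noteq> 0 \<and>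
           (\<forall>w. z $ w \<noteq> 0 \<longrightarrow> gdist adj u w = i \<and> gdist adj v w = gdist adj u v - i)"
proof -
  define d where "d = gdist adj u v"
  have Kv: "krylov (evec v) \<subseteq> krylov (evec u)"
    using krylov_invariant v by (intro krylov_minimal subspace_krylov)
  have "d \<le> ecc adj v" using gdist_le_ecc[of v u] by (simp add: d_def gdist_sym)
  then have "d - i + 1 \<le> dim (krylov_upto (evec v) (d - i))"
    by (intro dim_krylov_upto) simp
  moreover have "i + 1 \<le> dim (krylov_upto (evec u) i)"
    using i uv by (intro dim_krylov_upto) (simp add: d_def)
  moreover have "dim (krylov (evec u)) = d + 1"
    using ext uv by (simp add: spectrally_extremal_def dim_krylov_evec_dual_degree d_def)
  ultimately have "\<exists>z\<in>krylov_upto (evec u) i \<inter> krylov_upto (evec v) (d - i). z \<noteq> 0"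
    using i unfolding d_def
    by (intro subspaces_meet_nontrivially[where U = "krylov (evec u)"] subspace_krylov_upto
        subspace_krylov krylov_upto_subset order.trans[OF krylov_upto_subset Kv]) linarith
  then obtain z where z: "z \<in> krylov_upto (evec u) i" "z \<in> krylov_upto (evec v) (d - i)" "z \<noteq> 0"
    by blast
  have "gdist adj u w = i \<and> gdist adj v w = d - i" if "z $ w \<noteq> 0" for w
  proof -
    have "d \<le> gdist adj u w + gdist adj v w"
      using gdist_triangle[of u v w] by (simp add: d_def gdist_sym[of w v])
    then show ?thesis
      using krylov_upto_support[OF z(1) that] krylov_upto_support[OF z(2) that] i d_def by linarith
  qed
  then show ?thesis using z(1,3) krylov_upto_subset d_def by blast
qed

text \<open>Since the Perron vector lies in the Krylov space and vanishes nowhere, a basis of the Krylov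
  space with the layers as supports is, layer by layer, proportional to the Perron vector.\<close>
lemma krylov_eq_layer_space_if_layer_basis:
  fixes z :: "nat \<Rightarrow> real^'n"
  assumes K: "krylov (evec u) = span (z ` {..ecc adj u})"
    and layer: "\<And>i w. i \<le> ecc adj u \<Longrightarrow> z i $ w \<noteq> 0 \<longleftrightarrow> gdist adj u w = i"
  shows "krylov (evec u) = layer_space u"
proof -
  let ?e = "ecc adj u"
  have perron_span: "perron \<in> span (z ` {..?e})" using perron_in_krylov[of u] K by simp
  have "\<exists>c. c \<noteq> 0 \<and> layer_vec u i = c *\<^sub>R z i" if i: "i \<le> ?e" for i
  proof -
    obtain w where "gdist adj u w = i" using exists_at_distance[OF i] by blast
    then have zw: "z i $ w \<noteq> 0" using layer[OF i] by simp
    have "layer_vec u i = (perron $ w / z i $ w) *\<^sub>R z i"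
    proof (subst vec_eq_iff, intro allI)
      fix w'
      show "layer_vec u i $ w' = ((perron $ w / z i $ w) *\<^sub>R z i) $ w'"
      proof (cases "gdist adj u w' = i")
        case True
        then have "perron $ w * z i $ w' = perron $ w' * z i $ w"
          using i zw layer by (intro span_disjoint_supports_proportional[OF perron_span]) auto
        then show ?thesis using True zw by (simp add: layer_vec_def field_simps)
      next
        case False
        then show ?thesis using layer[OF i, of w'] by (simp add: layer_vec_def)
      qed
    qed
    moreover have "perron $ w / z i $ w \<noteq> 0" using zw perron_pos[of w] by simp
    ultimately show ?thesis by blast
  qed
  then obtain c where c: "\<And>i. i \<le> ?e \<Longrightarrow> c i \<noteq> 0 \<and> layer_vec u i = c i *\<^sub>R z i" by metis
  have "layer_space u \<subseteq> span (z ` {..?e})"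
    unfolding layer_space_def
  proof (rule span_minimal[OF image_subsetI subspace_span])
    fix i assume "i \<in> {..?e}"
    then show "layer_vec u i \<in> span (z ` {..?e})" using c by (simp add: span_base span_scale)
  qed
  moreover have "span (z ` {..?e}) \<subseteq> layer_space u"
    unfolding layer_space_def
  proof (rule span_minimal[OF image_subsetI subspace_span])
    fix i assume "i \<in> {..?e}"
    then have "z i = (1 / c i) *\<^sub>R layer_vec u i" using c by simp
    then show "z i \<in> span (layer_vec u ` {..?e})"
      using \<open>i \<in> {..?e}\<close> by (simp add: span_base span_scale)
  qed
  ultimately show ?thesis using K by blast
qed

lemma krylov_eq_layer_space_if_extremal:
  assumes ext: "spectrally_extremal adj u" and v: "evec v \<in> krylov (evec u)"
    and uv: "gdist adj u v = ecc adj u"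
  shows "(\<forall>w. gdist adj u w + gdist adj v w = gdist adj u v) \<and> krylov (evec u) = layer_space u"
proof -
  define d where "d = gdist adj u v"
  obtain z where z: "\<And>i. i \<le> d \<Longrightarrow> z i \<in> krylov (evec u) \<and> z i \<noteq> 0 \<and>
      (\<forall>w. z i $ w \<noteq> 0 \<longrightarrow> gdist adj u w = i \<and> gdist adj v w = d - i)"
    using geodesic_vector_in_krylov[OF ext v uv] unfolding d_def by metis
  have on_layer: "gdist adj u w = i \<and> gdist adj v w = d - i" if "i \<le> d" "z i $ w \<noteq> 0" for i w
    using z[OF that(1)] that(2) by blast
  have "dim (krylov (evec u)) \<le> card {..d}"
    using ext uv by (simp add: spectrally_extremal_def dim_krylov_evec_dual_degree d_def)
  moreover have "i = j" if "i \<le> d" "j \<le> d" "z i $ w \<noteq> 0" "z j $ w \<noteq> 0" for i j w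
    using on_layer[OF that(1,3)] on_layer[OF that(2,4)] by simp
  ultimately have K: "krylov (evec u) = span (z ` {..d})"
    using z by (intro span_eq_if_disjoint_supports subspace_krylov) auto
  have cover: "\<exists>i\<in>{..d}. z i $ w \<noteq> 0" for w
    using perron_in_krylov[of u] perron_pos[of w] K by (intro nth_nonzero_in_span_image) auto
  have "gdist adj u w + gdist adj v w = d" for w
    using cover[of w] on_layer by fastforce
  moreover have "z i $ w \<noteq> 0 \<longleftrightarrow> gdist adj u w = i" if "i \<le> d" for i w
  proof
    assume "gdist adj u w = i"
    obtain j where j: "j \<le> d" "z j $ w \<noteq> 0" using cover by blast
    then show "z i $ w \<noteq> 0" using on_layer[OF j] \<open>gdist adj u w = i\<close> by simp
  qed (simp add: on_layer[OF that])
  ultimately show ?thesis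
    using krylov_eq_layer_space_if_layer_basis[of u z] K uv d_def by simp
qed

lemma extremal_strongly_cospectral_imp_antipodal:
  assumes ext: "spectrally_extremal adj u" and sc: "strongly_cospectral adj u v"
    and uv: "gdist adj u v = ecc adj u"
  shows "antipodal adj u v"
proof -
  have co: "cospectral adj u v" and v: "evec v \<in> krylov (evec u)"
    using sc strongly_cospectral_iff by blast+
  obtain geodesic: "\<And>w. gdist adj u w + gdist adj v w = gdist adj u v"
    and K: "krylov (evec u) = layer_space u"
    using krylov_eq_layer_space_if_extremal[OF ext v uv] by blast
  have "pseudo_equitable adj (distance_partition adj u)"
    using K pseudo_equitable_iff_krylov_eq_layer_space by blast
  moreover have "distance_partition adj u = distance_partition adj v"
    using geodesic by (rule distance_partitions_eq)
  ultimately show ?thesis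
    unfolding antipodal_def using co uv singleton_in_distance_partition by metis
qed

end

theorem theorem3p3:
  fixes adj :: "'n::finite \<Rightarrow> 'n \<Rightarrow> bool" and u v :: 'n
  assumes "simple_graph adj" and "connected_graph adj"
  shows "(antipodal adj u v \<longrightarrow>
            spectrally_extremal adj u \<and> spectrally_extremal adj v \<and>
            strongly_cospectral adj u v)
       \<and> (spectrally_extremal adj u \<and> strongly_cospectral adj u v \<and>
            gdist adj u v = ecc adj u \<longrightarrow> antipodal adj u v)"
proof -
  interpret connected_undirected_graph adj
    using assms by unfold_locales (auto simp: simple_graph_def)
  show ?thesis
    using antipodal_imp_extremal_strongly_cospectral extremal_strongly_cospectral_imp_antipodal
    by blast
qed

end
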